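(* Let $F$ be the unique series in $\mathbb{Q}[x,\bar x,y,\bar y][[t]]$ satisfying $(1-St)F=\bar x\bar y-\bar x t[x^0][y^<]F-\bar y t[y^0][x^<]F$. Let $F_1=[x^<][y^<]F$, $F_2=F-F_1$, and, writing $F_2=\sum c_{i,j,n}x^iy^jt^n$, let $F_2^D=\sum_{i\ge0}\sum_n c_{i,i,n}x^iy^it^n$ and $F_2^L=\sum_{i\ge0}\sum_{j\le i-1}\sum_n c_{i,j,n}x^iy^jt^n$. Then $$(1-St)\,F_2^L=t\,[\bar x]F_1+\bigl(tx+t\bar y-\tfrac12\bigr)F_2^D-t\bar x\,[x^0]F_2^L.$$
   Context: Notation: $\bar x=x^{-1}$, $\bar y=y^{-1}$, $S=x+y+\bar x+\bar y$; series in $\mathbb{Q}[x,\bar x,y,\bar y][[t]]$. For $G=\sum c_{i,j,n}x^iy^jt^n$: $[x^0]G=\sum_{j,n}c_{0,j,n}y^jt^n$, $[y^0]G=\sum_{i,n}c_{i,0,n}x^it^n$, $[\bar x]G=\sum_{j,n}c_{-1,j,n}y^jt^n$ (coefficient of $x^{-1}$); $[x^<]G$ (resp. $[y^<]G$) is the sum of terms with negative $x$-exponent (resp. $y$-exponent). *)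

theory Defs
  imports Main "HOL.Rat"
begin

text \<open>A series in Q[x, 1/x, y, 1/y][[t]] is represented by its coefficient function:
  G i j n is the coefficient of x^i y^j t^n.  Membership in the ring means that for each
  power of t only finitely many Laurent monomials occur.\<close>

type_synonym ser = "int \<Rightarrow> int \<Rightarrow> nat \<Rightarrow> rat"

definition in_ring :: "ser \<Rightarrow> bool" where
  "in_ring G \<longleftrightarrow> (\<forall>n. finite {(i, j). G i j n \<noteq> 0})"

definition sadd :: "ser \<Rightarrow> ser \<Rightarrow> ser" where
  "sadd F G = (\<lambda>i j n. F i j n + G i j n)"

definition ssub :: "ser \<Rightarrow> ser \<Rightarrow> ser" where
  "ssub F G = (\<lambda>i j n. F i j n - G i j n)"

definition sscale :: "rat \<Rightarrow> ser \<Rightarrow> ser" where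
  "sscale c G = (\<lambda>i j n. c * G i j n)"

definition xmul :: "int \<Rightarrow> ser \<Rightarrow> ser" where
  "xmul a G = (\<lambda>i j n. G (i - a) j n)"

definition ymul :: "int \<Rightarrow> ser \<Rightarrow> ser" where
  "ymul b G = (\<lambda>i j n. G i (j - b) n)"

definition tmul :: "ser \<Rightarrow> ser" where
  "tmul G = (\<lambda>i j n. if n = 0 then 0 else G i j (n - 1))"

definition monom :: "int \<Rightarrow> int \<Rightarrow> nat \<Rightarrow> ser" where
  "monom a b k = (\<lambda>i j n. if i = a \<and> j = b \<and> n = k then 1 else 0)"

definition Smul :: "ser \<Rightarrow> ser" where
  "Smul G = sadd (sadd (xmul 1 G) (xmul (-1) G)) (sadd (ymul 1 G) (ymul (-1) G))"

definition one_minus_St :: "ser \<Rightarrow> ser" where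
  "one_minus_St G = ssub G (tmul (Smul G))"

definition coeff_x0 :: "ser \<Rightarrow> ser" where
  "coeff_x0 G = (\<lambda>i j n. if i = 0 then G 0 j n else 0)"

definition coeff_y0 :: "ser \<Rightarrow> ser" where
  "coeff_y0 G = (\<lambda>i j n. if j = 0 then G i 0 n else 0)"

definition coeff_xbar :: "ser \<Rightarrow> ser" where
  "coeff_xbar G = (\<lambda>i j n. if i = 0 then G (-1) j n else 0)"

definition neg_x :: "ser \<Rightarrow> ser" where
  "neg_x G = (\<lambda>i j n. if i < 0 then G i j n else 0)"

definition neg_y :: "ser \<Rightarrow> ser" where
  "neg_y G = (\<lambda>i j n. if j < 0 then G i j n else 0)"

definition diag_part :: "ser \<Rightarrow> ser" where
  "diag_part G = (\<lambda>i j n. if 0 \<le> i \<and> j = i then G i j n else 0)"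

definition low_part :: "ser \<Rightarrow> ser" where
  "low_part G = (\<lambda>i j n. if 0 \<le> i \<and> j \<le> i - 1 then G i j n else 0)"

end

theory Submission
  imports Defs
begin

text \<open>The kernel equation is invariant under exchanging x and y, hence so is F.  On the
  diagonal i = j \<ge> 0 the recurrence for the coefficients of F therefore reads
  F(i,i,n+1) = 2 (F(i+1,i,n) + F(i,i-1,n)), which is the source of the term -F_2^D/2.
  Elsewhere the identity follows by comparing the coefficients of (1 - S t) F_2^L with the
  recurrence region by region: only the neighbours of the strictly lower triangle that
  lie on the diagonal or in the column x^{-1} contribute.  The identity holds coefficientwise.\<close>

definition kernel_equation :: "ser \<Rightarrow> bool" where
  "kernel_equation F \<longleftrightarrow>
     one_minus_St F =
       ssub (ssub (monom (-1) (-1) 0) (xmul (-1) (tmul (coeff_x0 (neg_y F)))))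
            (ymul (-1) (tmul (coeff_y0 (neg_x F))))"

lemma tmul_coeff_0 [simp]: "tmul G i j 0 = 0"
  by (simp add: tmul_def)

lemma tmul_coeff_Suc [simp]: "tmul G i j (Suc m) = G i j m"
  by (simp add: tmul_def)

lemma one_minus_St_coeff_0 [simp]: "one_minus_St G i j 0 = G i j 0"
  by (simp add: one_minus_St_def ssub_def)

lemma one_minus_St_coeff_Suc [simp]:
  "one_minus_St G i j (Suc m) =
     G i j (Suc m) - (G (i - 1) j m + G (i + 1) j m + G i (j - 1) m + G i (j + 1) m)"
  by (simp add: one_minus_St_def ssub_def Smul_def sadd_def xmul_def ymul_def)

lemma kernel_equation_coeff_0:
  assumes "kernel_equation F"
  shows "F i j 0 = (if i = -1 \<and> j = -1 then 1 else 0)"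
  using fun_cong[OF fun_cong[OF fun_cong[OF assms[unfolded kernel_equation_def], of i], of j], of 0]
  by (simp add: ssub_def monom_def xmul_def ymul_def)

lemma kernel_equation_coeff_Suc:
  assumes "kernel_equation F"
  shows "F i j (Suc m) =
           F (i - 1) j m + F (i + 1) j m + F i (j - 1) m + F i (j + 1) m
           - (if i = -1 \<and> j < 0 then F 0 j m else 0)
           - (if j = -1 \<and> i < 0 then F i 0 m else 0)"
  using fun_cong[OF fun_cong[OF fun_cong[OF assms[unfolded kernel_equation_def], of i], of j], of "Suc m"]
  by (cases "i = -1"; cases "j = -1")
     (simp_all add: ssub_def monom_def xmul_def ymul_def coeff_x0_def coeff_y0_def
        neg_x_def neg_y_def algebra_simps)

lemma kernel_equation_symmetric:
  assumes "kernel_equation F"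
  shows "F i j n = F j i n"
proof (induction n arbitrary: i j)
  case 0
  show ?case by (simp add: kernel_equation_coeff_0[OF assms])
next
  case (Suc n)
  show ?case
    unfolding kernel_equation_coeff_Suc[OF assms] using Suc.IH by (simp add: algebra_simps)
qed

lemma kernel_equation_diagonal:
  assumes "kernel_equation F" and "0 \<le> i"
  shows "F i i (Suc m) = 2 * (F (i + 1) i m + F i (i - 1) m)"
  using assms kernel_equation_symmetric[OF assms(1), of "i - 1" i m]
    kernel_equation_symmetric[OF assms(1), of i "i + 1" m]
  by (simp add: kernel_equation_coeff_Suc)

lemma neg_quadrant_coeff [simp]:
  "neg_x (neg_y G) i j n = (if i < 0 \<and> j < 0 then G i j n else 0)"
  by (simp add: neg_x_def neg_y_def)

lemma low_part_off_neg_quadrant: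
  "low_part (ssub G (neg_x (neg_y G))) i j n = (if 0 \<le> i \<and> j \<le> i - 1 then G i j n else 0)"
  by (simp add: low_part_def ssub_def)

lemma diag_part_off_neg_quadrant:
  "diag_part (ssub G (neg_x (neg_y G))) i j n = (if 0 \<le> i \<and> j = i then G i i n else 0)"
  by (simp add: diag_part_def ssub_def)

theorem mainTheorem10:
  fixes F :: ser
  assumes "in_ring F"
    and "one_minus_St F =
           ssub (ssub (monom (-1) (-1) 0)
                      (xmul (-1) (tmul (coeff_x0 (neg_y F)))))
                (ymul (-1) (tmul (coeff_y0 (neg_x F))))"
  defines "F1 \<equiv> neg_x (neg_y F)"
  defines "F2 \<equiv> ssub F F1"
  shows "one_minus_St (low_part F2) =
           ssub (sadd (tmul (coeff_xbar F1))
                      (ssub (sadd (tmul (xmul 1 (diag_part F2))) (tmul (ymul (-1) (diag_part F2))))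
                            (sscale (1/2) (diag_part F2))))
                (tmul (xmul (-1) (coeff_x0 (low_part F2))))"
proof (intro ext, goal_cases)
  case (1 i j n)
  have eq: "kernel_equation F"
    using assms(2) by (simp add: kernel_equation_def)
  note coeffs = F1_def low_part_off_neg_quadrant[of F, folded F1_def F2_def]
    diag_part_off_neg_quadrant[of F, folded F1_def F2_def]
    ssub_def sadd_def sscale_def xmul_def ymul_def coeff_xbar_def coeff_x0_def
  show ?case
  proof (cases n)
    case 0
    then show ?thesis by (simp add: coeffs kernel_equation_coeff_0[OF eq])
  next
    case (Suc m)
    consider "i < 0" | "0 \<le> i" "j \<le> i - 1" | "0 \<le> i" "j = i" | "0 \<le> i" "i + 1 \<le> j"
      by linarith
    then show ?thesis
    proof cases
      case 2
      then show ?thesis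
        using kernel_equation_coeff_Suc[OF eq, of i j m] by (auto simp: Suc coeffs)
    next
      case 3
      then show ?thesis
        using kernel_equation_diagonal[OF eq, of i m] by (auto simp: Suc coeffs field_simps)
    qed (auto simp: Suc coeffs)
  qed
qed

end
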